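(* For $d\ge3$, the maximal number of pairwise disjoint lines in $\mathcal{L}^0\cup\mathcal{L}^s$ is $2d$ for $s=1,2$, and the maximal number of pairwise disjoint lines in $\mathcal{L}^1\cup\mathcal{L}^2$ is $2d$. Consequently the maximal number $\mathfrak{s}({\rm F}_d)$ of pairwise disjoint lines on ${\rm F}_d$ satisfies $2d\le\mathfrak{s}({\rm F}_d)\le 3d$.
   Context: ${\rm F}_d\subset\mathbb{P}^3(\mathbb{C})$ is the surface $x^d-y^d-z^d+w^d=0$. Fix a primitive $d$-th root of unity $\eta$ and $v\in\mathbb{C}$ with $v^d=-1$. For $k,i\in\{0,\dots,d-1\}$ define $L^0_{k,i}:\{y=\eta^i x,\ w=\eta^k z\}$, $L^1_{k,i}:\{x=\eta^{k+i}z,\ y=\eta^i w\}$, $L^2_{k,i}:\{x=v\eta^i w,\ y=v\eta^{k+i}z\}$, and $\mathcal{L}^s=\{L^s_{k,i}\}_{k,i}$; these are all the lines on ${\rm F}_d$. *)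

theory Defs
  imports Complex_Main
begin

text \<open>Points of projective 3-space are represented by their homogeneous coordinate
vectors (x,y,z,w) in C^4. A projective line is represented by the corresponding
2-dimensional linear subspace of C^4. Two projective lines are disjoint iff the
subspaces meet only in the zero vector.\<close>

type_synonym pt4 = "complex \<times> complex \<times> complex \<times> complex"

definition primitive_root :: "nat \<Rightarrow> complex \<Rightarrow> bool" where
  "primitive_root d \<eta> \<longleftrightarrow> \<eta> ^ d = 1 \<and> (\<forall>m. 0 < m \<and> m < d \<longrightarrow> \<eta> ^ m \<noteq> 1)"

definition L0 :: "complex \<Rightarrow> nat \<Rightarrow> nat \<Rightarrow> pt4 set" where
  "L0 \<eta> k i = {(x,y,z,w). y = \<eta>^i * x \<and> w = \<eta>^k * z}"

definition L1 :: "complex \<Rightarrow> nat \<Rightarrow> nat \<Rightarrow> pt4 set" where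
  "L1 \<eta> k i = {(x,y,z,w). x = \<eta>^(k+i) * z \<and> y = \<eta>^i * w}"

definition L2 :: "complex \<Rightarrow> complex \<Rightarrow> nat \<Rightarrow> nat \<Rightarrow> pt4 set" where
  "L2 \<eta> v k i = {(x,y,z,w). x = v * \<eta>^i * w \<and> y = v * \<eta>^(k+i) * z}"

definition fam0 :: "nat \<Rightarrow> complex \<Rightarrow> pt4 set set" where
  "fam0 d \<eta> = {L0 \<eta> k i | k i. k < d \<and> i < d}"

definition fam1 :: "nat \<Rightarrow> complex \<Rightarrow> pt4 set set" where
  "fam1 d \<eta> = {L1 \<eta> k i | k i. k < d \<and> i < d}"

definition fam2 :: "nat \<Rightarrow> complex \<Rightarrow> complex \<Rightarrow> pt4 set set" where
  "fam2 d \<eta> v = {L2 \<eta> v k i | k i. k < d \<and> i < d}"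

text \<open>All lines on the Fermat surface F_d (by the context, these are exactly the
lines of the three families).\<close>

definition lines_F :: "nat \<Rightarrow> complex \<Rightarrow> complex \<Rightarrow> pt4 set set" where
  "lines_F d \<eta> v = fam0 d \<eta> \<union> fam1 d \<eta> \<union> fam2 d \<eta> v"

definition pairwise_disjoint_lines :: "pt4 set set \<Rightarrow> bool" where
  "pairwise_disjoint_lines S \<longleftrightarrow>
     (\<forall>A\<in>S. \<forall>B\<in>S. A \<noteq> B \<longrightarrow> A \<inter> B \<subseteq> {(0,0,0,0)})"

definition max_disjoint :: "pt4 set set \<Rightarrow> nat" where
  "max_disjoint F = Max {card S | S. S \<subseteq> F \<and> pairwise_disjoint_lines S}"

definition s_F :: "nat \<Rightarrow> complex \<Rightarrow> complex \<Rightarrow> nat" where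
  "s_F d \<eta> v = max_disjoint (lines_F d \<eta> v)"

end

theory Submission
  imports Defs
begin

text \<open>
  Upper bound: in each family the lines with the same second index \<open>i\<close> pass through a
  common point, \<open>(1 : \<eta>^i : 0 : 0)\<close>, \<open>(0 : \<eta>^i : 0 : 1)\<close> or \<open>(v \<eta>^i : 0 : 0 : 1)\<close>.
  So pairwise disjoint lines of one family have distinct \<open>i\<close>, there are at most \<open>d\<close> of
  them, and at most \<open>2d\<close> (resp. \<open>3d\<close>) in a union of two (resp. three) families.

  Lower bound: for \<open>a < d\<close> the lines \<open>L0 \<eta> a a\<close> and \<open>L1 \<eta> 1 a\<close>, resp. \<open>L0 \<eta> a (d-1-a)\<close>
  and \<open>L2 \<eta> v 0 a\<close>, resp. \<open>L1 \<eta> (2a) (d-1-a)\<close> and \<open>L2 \<eta> v (2a+c) (d-1-a)\<close> with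
  \<open>v\<^sup>2 \<eta>^c \<noteq> 1\<close>, are \<open>2d\<close> pairwise disjoint lines. Two lines meeting in a nonzero point
  would force two distinct powers \<open>\<eta>^m\<close>, \<open>m < d\<close>, to coincide, or, in the last case,
  \<open>v\<^sup>2 \<eta>^c = 1\<close>.
\<close>

lemma primitive_root_nonzero:
  assumes "primitive_root d \<eta>" "d > 0"
  shows "\<eta> \<noteq> 0"
  using assms by (auto simp: primitive_root_def power_0_left)

lemma primitive_root_neq_1:
  assumes "primitive_root d \<eta>" "d > 1"
  shows "\<eta> \<noteq> 1"
  using assms unfolding primitive_root_def by (metis power_one_right zero_less_one)

lemma primitive_root_power_eq_iff:
  assumes "primitive_root d \<eta>" "a < d" "b < d"
  shows "\<eta> ^ a = \<eta> ^ b \<longleftrightarrow> a = b"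
proof
  have "\<eta> \<noteq> 0" using primitive_root_nonzero[OF assms(1)] assms(2) by simp
  have no_repeat: False if "m < n" "n < d" "\<eta> ^ m = \<eta> ^ n" for m n
  proof -
    have "\<eta> ^ m * \<eta> ^ (n - m) = \<eta> ^ m * 1"
      using that by (metis le_add_diff_inverse less_imp_le mult.right_neutral power_add)
    with \<open>\<eta> \<noteq> 0\<close> have "\<eta> ^ (n - m) = 1" by simp
    with that assms(1) show False unfolding primitive_root_def by auto
  qed
  assume "\<eta> ^ a = \<eta> ^ b"
  with assms no_repeat[of a b] no_repeat[of b a] show "a = b" by fastforce
qed simp

lemma power_eq_power_mod:
  fixes x :: "'a::monoid_mult"
  assumes "x ^ d = 1"
  shows "x ^ n = x ^ (n mod d)"
proof -
  have "x ^ n = x ^ (d * (n div d) + n mod d)"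
    by simp
  also have "\<dots> = (x ^ d) ^ (n div d) * x ^ (n mod d)"
    by (simp only: power_add power_mult)
  finally show ?thesis
    using assms by simp
qed

lemma power_mod_add_eq:
  fixes x :: "'a::monoid_mult"
  assumes "x ^ d = 1"
  shows "x ^ (k mod d + i) = x ^ (k + i)"
  using power_eq_power_mod[OF assms, of "k + i"] power_eq_power_mod[OF assms, of "k mod d + i"]
  by (simp add: mod_add_left_eq)

lemma L0_point: "(1, \<eta> ^ i, 0, 0) \<in> L0 \<eta> k i"
  by (simp add: L0_def)

lemma L1_point: "(0, \<eta> ^ i, 0, 1) \<in> L1 \<eta> k i"
  by (simp add: L1_def)

lemma L2_point: "(v * \<eta> ^ i, 0, 0, 1) \<in> L2 \<eta> v k i"
  by (simp add: L2_def)

lemma L0_nontrivial: "\<not> L0 \<eta> k i \<subseteq> {(0,0,0,0)}"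
  using L0_point[of \<eta> i k] by auto

lemma L1_nontrivial: "\<not> L1 \<eta> k i \<subseteq> {(0,0,0,0)}"
  using L1_point[of \<eta> i k] by auto

lemma L2_nontrivial: "\<not> L2 \<eta> v k i \<subseteq> {(0,0,0,0)}"
  using L2_point[of v \<eta> i k] by auto

lemma L0_in_fam0: "k < d \<Longrightarrow> i < d \<Longrightarrow> L0 \<eta> k i \<in> fam0 d \<eta>"
  unfolding fam0_def by blast

lemma L1_in_fam1:
  assumes "\<eta> ^ d = 1" "i < d"
  shows "L1 \<eta> k i \<in> fam1 d \<eta>"
proof -
  have "L1 \<eta> k i = L1 \<eta> (k mod d) i"
    using power_mod_add_eq[OF assms(1)] by (simp add: L1_def)
  moreover have "k mod d < d"
    using assms(2) by simp
  ultimately show ?thesis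
    unfolding fam1_def using assms(2) by blast
qed

lemma L2_in_fam2:
  assumes "\<eta> ^ d = 1" "i < d"
  shows "L2 \<eta> v k i \<in> fam2 d \<eta> v"
proof -
  have "L2 \<eta> v k i = L2 \<eta> v (k mod d) i"
    using power_mod_add_eq[OF assms(1)] by (simp add: L2_def)
  moreover have "k mod d < d"
    using assms(2) by simp
  ultimately show ?thesis
    unfolding fam2_def using assms(2) by blast
qed

lemma finite_fam0: "finite (fam0 d \<eta>)"
  by (simp add: fam0_def finite_image_set2)

lemma finite_fam1: "finite (fam1 d \<eta>)"
  by (simp add: fam1_def finite_image_set2)

lemma finite_fam2: "finite (fam2 d \<eta> v)"
  by (simp add: fam2_def finite_image_set2)

lemma L0_L0_disjoint:
  assumes "\<eta> ^ i \<noteq> \<eta> ^ i'" "\<eta> ^ k \<noteq> \<eta> ^ k'"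
  shows "L0 \<eta> k i \<inter> L0 \<eta> k' i' \<subseteq> {(0,0,0,0)}"
  using assms by (auto simp: L0_def)

lemma L1_L1_disjoint:
  assumes "\<eta> ^ i \<noteq> \<eta> ^ i'" "\<eta> ^ (k + i) \<noteq> \<eta> ^ (k' + i')"
  shows "L1 \<eta> k i \<inter> L1 \<eta> k' i' \<subseteq> {(0,0,0,0)}"
  using assms by (auto simp: L1_def)

lemma L2_L2_disjoint:
  assumes "v \<noteq> 0" "\<eta> ^ i \<noteq> \<eta> ^ i'" "\<eta> ^ (k + i) \<noteq> \<eta> ^ (k' + i')"
  shows "L2 \<eta> v k i \<inter> L2 \<eta> v k' i' \<subseteq> {(0,0,0,0)}"
  using assms by (auto simp: L2_def)

lemma L0_L1_disjoint:
  assumes "\<eta> \<noteq> 0" "\<eta> ^ (i + k') \<noteq> \<eta> ^ k"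
  shows "L0 \<eta> k i \<inter> L1 \<eta> k' j \<subseteq> {(0,0,0,0)}"
proof
  fix p assume "p \<in> L0 \<eta> k i \<inter> L1 \<eta> k' j"
  moreover obtain x y z w where p: "p = (x, y, z, w)" by (cases p)
  ultimately have y: "y = \<eta> ^ i * x" "y = \<eta> ^ j * w" and x: "x = \<eta> ^ (k' + j) * z"
    and w: "w = \<eta> ^ k * z"
    by (auto simp: L0_def L1_def)
  have "\<eta> ^ j * (\<eta> ^ (i + k') * z) = \<eta> ^ i * x"
    using x by (simp add: power_add ac_simps)
  also have "\<dots> = \<eta> ^ j * w"
    by (metis y)
  also have "\<dots> = \<eta> ^ j * (\<eta> ^ k * z)"
    using w by simp
  finally have "z = 0" using assms by simp
  with x y w show "p \<in> {(0,0,0,0)}" by (simp add: p)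
qed

lemma L0_L2_disjoint:
  assumes "\<eta> \<noteq> 0" "v \<noteq> 0" "\<eta> ^ (i + k) \<noteq> \<eta> ^ k'"
  shows "L0 \<eta> k i \<inter> L2 \<eta> v k' j \<subseteq> {(0,0,0,0)}"
proof
  fix p assume "p \<in> L0 \<eta> k i \<inter> L2 \<eta> v k' j"
  moreover obtain x y z w where p: "p = (x, y, z, w)" by (cases p)
  ultimately have y: "y = \<eta> ^ i * x" "y = v * \<eta> ^ (k' + j) * z" and x: "x = v * \<eta> ^ j * w"
    and w: "w = \<eta> ^ k * z"
    by (auto simp: L0_def L2_def)
  have "(v * \<eta> ^ j) * (\<eta> ^ (i + k) * z) = \<eta> ^ i * x"
    using x w by (simp add: power_add ac_simps)
  also have "\<dots> = v * \<eta> ^ (k' + j) * z"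
    by (metis y)
  also have "\<dots> = (v * \<eta> ^ j) * (\<eta> ^ k' * z)"
    by (simp add: power_add ac_simps)
  finally have "z = 0" using assms by simp
  with x y w show "p \<in> {(0,0,0,0)}" by (simp add: p)
qed

lemma L1_L2_disjoint:
  assumes "\<eta> \<noteq> 0" "\<eta> ^ (k + 2 * i) \<noteq> v\<^sup>2 * \<eta> ^ (k' + 2 * j)"
  shows "L1 \<eta> k i \<inter> L2 \<eta> v k' j \<subseteq> {(0,0,0,0)}"
proof
  fix p assume "p \<in> L1 \<eta> k i \<inter> L2 \<eta> v k' j"
  moreover obtain x y z w where p: "p = (x, y, z, w)" by (cases p)
  ultimately have x: "x = \<eta> ^ (k + i) * z" "x = v * \<eta> ^ j * w"
    and y: "y = \<eta> ^ i * w" "y = v * \<eta> ^ (k' + j) * z"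
    by (auto simp: L1_def L2_def)
  have "\<eta> ^ (k + 2 * i) * z = \<eta> ^ i * (\<eta> ^ (k + i) * z)"
    by (simp add: power_add mult_2 mult_2_right ac_simps)
  also have "\<dots> = \<eta> ^ i * (v * \<eta> ^ j * w)"
    by (metis x)
  also have "\<dots> = v * \<eta> ^ j * (v * \<eta> ^ (k' + j) * z)"
    using y by (simp add: ac_simps)
  also have "\<dots> = v\<^sup>2 * \<eta> ^ (k' + 2 * j) * z"
    by (simp add: power_add power2_eq_square mult_2 mult_2_right ac_simps)
  finally have "z = 0" using assms by simp
  with x y \<open>\<eta> \<noteq> 0\<close> show "p \<in> {(0,0,0,0)}" by (simp add: p)
qed

lemma pairwise_disjoint_lines_subset:
  "pairwise_disjoint_lines S \<Longrightarrow> T \<subseteq> S \<Longrightarrow> pairwise_disjoint_lines T"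
  unfolding pairwise_disjoint_lines_def by blast

lemma pairwise_disjoint_linesD:
  assumes "pairwise_disjoint_lines S" "A \<in> S" "B \<in> S" "p \<in> A" "p \<in> B" "p \<noteq> (0,0,0,0)"
  shows "A = B"
  using assms unfolding pairwise_disjoint_lines_def by blast

lemma pairwise_disjoint_lines_image:
  assumes "\<And>n. n \<in> I \<Longrightarrow> \<not> h n \<subseteq> {(0,0,0,0)}"
    and "\<And>n m. n \<in> I \<Longrightarrow> m \<in> I \<Longrightarrow> n \<noteq> m \<Longrightarrow> h n \<inter> h m \<subseteq> {(0,0,0,0)}"
  shows "pairwise_disjoint_lines (h ` I)" and "card (h ` I) = card I"
proof -
  show "pairwise_disjoint_lines (h ` I)"
    unfolding pairwise_disjoint_lines_def using assms(2) by auto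
  have "inj_on h I"
  proof (rule inj_onI)
    fix n m assume "n \<in> I" "m \<in> I" "h n = h m"
    with assms show "n = m" by fastforce
  qed
  then show "card (h ` I) = card I"
    by (rule card_image)
qed

lemma finite_disjoint_subfamily_sizes:
  assumes "finite F"
  shows "finite {card S | S. S \<subseteq> F \<and> pairwise_disjoint_lines S}"
proof (rule finite_subset)
  show "{card S | S. S \<subseteq> F \<and> pairwise_disjoint_lines S} \<subseteq> card ` Pow F"
    by blast
qed (use assms in simp)

lemma card_le_max_disjoint:
  assumes "finite F" "S \<subseteq> F" "pairwise_disjoint_lines S"
  shows "card S \<le> max_disjoint F"
proof -
  have "card S \<in> {card S | S. S \<subseteq> F \<and> pairwise_disjoint_lines S}"
    using assms(2,3) by blast
  then show ?thesis
    unfolding max_disjoint_def by (rule Max_ge[OF finite_disjoint_subfamily_sizes[OF assms(1)]])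
qed

lemma max_disjoint_attained:
  assumes "finite F"
  obtains S where "S \<subseteq> F" "pairwise_disjoint_lines S" "card S = max_disjoint F"
proof -
  have "pairwise_disjoint_lines {}"
    by (simp add: pairwise_disjoint_lines_def)
  then have "card {} \<in> {card S | S. S \<subseteq> F \<and> pairwise_disjoint_lines S}"
    by (intro CollectI exI[of _ "{}"]) simp
  then have "max_disjoint F \<in> {card S | S. S \<subseteq> F \<and> pairwise_disjoint_lines S}"
    unfolding max_disjoint_def
    by (intro Max_in finite_disjoint_subfamily_sizes[OF assms]) blast
  then obtain S where "S \<subseteq> F" "pairwise_disjoint_lines S" "card S = max_disjoint F"
    by auto
  then show ?thesis by (rule that)
qed

lemma max_disjoint_le:
  assumes "finite F" "\<And>S. S \<subseteq> F \<Longrightarrow> pairwise_disjoint_lines S \<Longrightarrow> card S \<le> M"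
  shows "max_disjoint F \<le> M"
proof -
  obtain S where "S \<subseteq> F" "pairwise_disjoint_lines S" "card S = max_disjoint F"
    using max_disjoint_attained[OF assms(1)] .
  with assms(2)[of S] show ?thesis by simp
qed

lemma max_disjoint_mono:
  assumes "finite G" "F \<subseteq> G"
  shows "max_disjoint F \<le> max_disjoint G"
proof -
  obtain S where S: "S \<subseteq> F" "pairwise_disjoint_lines S" "card S = max_disjoint F"
    using max_disjoint_attained[OF finite_subset[OF assms(2,1)]] .
  have "card S \<le> max_disjoint G"
    using S assms by (intro card_le_max_disjoint) auto
  with S(3) show ?thesis by simp
qed

lemma max_disjoint_Un_le:
  assumes "finite F" "finite G"
  shows "max_disjoint (F \<union> G) \<le> max_disjoint F + max_disjoint G"
proof (rule max_disjoint_le)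
  fix S assume S: "S \<subseteq> F \<union> G" "pairwise_disjoint_lines S"
  then have "S = (S \<inter> F) \<union> (S \<inter> G)"
    by blast
  then have "card S \<le> card (S \<inter> F) + card (S \<inter> G)"
    by (metis card_Un_le)
  also have "\<dots> \<le> max_disjoint F + max_disjoint G"
    using assms pairwise_disjoint_lines_subset[OF S(2)]
    by (intro add_mono card_le_max_disjoint) auto
  finally show "card S \<le> max_disjoint F + max_disjoint G" .
qed (use assms in simp)

lemma max_disjoint_grid_le:
  fixes L :: "nat \<Rightarrow> nat \<Rightarrow> pt4 set" and P :: "nat \<Rightarrow> pt4"
  assumes "\<And>k i. P i \<in> L k i" "\<And>i. P i \<noteq> (0,0,0,0)"
  shows "max_disjoint {L k i | k i. k < d \<and> i < d} \<le> d"
proof (rule max_disjoint_le)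
  show "finite {L k i | k i. k < d \<and> i < d}"
    by (simp add: finite_image_set2)
  fix S assume S: "S \<subseteq> {L k i | k i. k < d \<and> i < d}" "pairwise_disjoint_lines S"
  define row where "row A = (SOME i. i < d \<and> (\<exists>k. A = L k i))" for A
  have row: "row A < d \<and> (\<exists>k. A = L k (row A))" if A: "A \<in> S" for A
  proof -
    obtain k i where "A = L k i" "i < d"
      using S(1) A by blast
    then have "\<exists>i. i < d \<and> (\<exists>k. A = L k i)"
      by blast
    then show ?thesis
      unfolding row_def by (rule someI_ex)
  qed
  have "inj_on row S"
  proof (rule inj_onI)
    fix A B assume "A \<in> S" "B \<in> S" "row A = row B"
    obtain k k' where "A = L k (row A)" "B = L k' (row B)"
      using row[OF \<open>A \<in> S\<close>] row[OF \<open>B \<in> S\<close>] by blast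
    then have "P (row A) \<in> A" and "P (row A) \<in> B"
      using assms(1) \<open>row A = row B\<close> by metis+
    with S(2) \<open>A \<in> S\<close> \<open>B \<in> S\<close> show "A = B"
      by (rule pairwise_disjoint_linesD) (rule assms(2))
  qed
  with row have "card S \<le> card {..<d}"
    by (intro card_inj_on_le) auto
  then show "card S \<le> d" by simp
qed

lemma max_disjoint_fam0_le: "max_disjoint (fam0 d \<eta>) \<le> d"
  unfolding fam0_def by (rule max_disjoint_grid_le[OF L0_point]) simp

lemma max_disjoint_fam1_le: "max_disjoint (fam1 d \<eta>) \<le> d"
  unfolding fam1_def by (rule max_disjoint_grid_le[OF L1_point]) simp

lemma max_disjoint_fam2_le: "max_disjoint (fam2 d \<eta> v) \<le> d"
  unfolding fam2_def by (rule max_disjoint_grid_le[OF L2_point]) simp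

lemma card_le_max_disjoint_two_families:
  assumes "finite F" "finite A" "finite B" "f ` A \<subseteq> F" "g ` B \<subseteq> F"
    and "\<And>a. a \<in> A \<Longrightarrow> \<not> f a \<subseteq> {(0,0,0,0)}" "\<And>b. b \<in> B \<Longrightarrow> \<not> g b \<subseteq> {(0,0,0,0)}"
    and "\<And>a a'. a \<in> A \<Longrightarrow> a' \<in> A \<Longrightarrow> a \<noteq> a' \<Longrightarrow> f a \<inter> f a' \<subseteq> {(0,0,0,0)}"
    and "\<And>b b'. b \<in> B \<Longrightarrow> b' \<in> B \<Longrightarrow> b \<noteq> b' \<Longrightarrow> g b \<inter> g b' \<subseteq> {(0,0,0,0)}"
    and "\<And>a b. a \<in> A \<Longrightarrow> b \<in> B \<Longrightarrow> f a \<inter> g b \<subseteq> {(0,0,0,0)}"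
  shows "card A + card B \<le> max_disjoint F"
proof -
  let ?h = "case_sum f g"
  have "\<not> ?h n \<subseteq> {(0,0,0,0)}" if "n \<in> A <+> B" for n
    using that assms(6,7) by auto
  moreover have "?h n \<inter> ?h m \<subseteq> {(0,0,0,0)}" if "n \<in> A <+> B" "m \<in> A <+> B" "n \<noteq> m" for n m
    using that(1,2) by (elim PlusE) (use that(3) assms(8-10) in \<open>simp_all add: Int_commute\<close>)
  ultimately have "pairwise_disjoint_lines (?h ` (A <+> B))" "card (?h ` (A <+> B)) = card A + card B"
    using pairwise_disjoint_lines_image[of "A <+> B" ?h] assms(2,3) by (simp_all add: card_Plus)
  moreover have "?h ` (A <+> B) \<subseteq> F"
    using assms(4,5) by auto
  ultimately show ?thesis
    using card_le_max_disjoint[OF assms(1)] by metis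
qed

lemma max_disjoint_fam0_fam1_ge:
  assumes "primitive_root d \<eta>" "2 \<le> d"
  shows "2 * d \<le> max_disjoint (fam0 d \<eta> \<union> fam1 d \<eta>)"
proof -
  have "\<eta> \<noteq> 0" "\<eta> \<noteq> 1" "\<eta> ^ d = 1"
    using primitive_root_nonzero[OF assms(1)] primitive_root_neq_1[OF assms(1)] assms
    by (simp_all add: primitive_root_def)
  note power_eq = primitive_root_power_eq_iff[OF assms(1)]
  have "card {..<d} + card {..<d} \<le> max_disjoint (fam0 d \<eta> \<union> fam1 d \<eta>)"
  proof (rule card_le_max_disjoint_two_families[where f = "\<lambda>a. L0 \<eta> a a" and g = "\<lambda>b. L1 \<eta> 1 b"])
    show "(\<lambda>a. L0 \<eta> a a) ` {..<d} \<subseteq> fam0 d \<eta> \<union> fam1 d \<eta>"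
      using L0_in_fam0 by auto
    show "(\<lambda>b. L1 \<eta> 1 b) ` {..<d} \<subseteq> fam0 d \<eta> \<union> fam1 d \<eta>"
      using L1_in_fam1[OF \<open>\<eta> ^ d = 1\<close>] by auto
    show "L0 \<eta> a a \<inter> L0 \<eta> a' a' \<subseteq> {(0,0,0,0)}" if "a \<in> {..<d}" "a' \<in> {..<d}" "a \<noteq> a'" for a a'
      using that by (intro L0_L0_disjoint) (simp_all add: power_eq)
    show "L1 \<eta> 1 b \<inter> L1 \<eta> 1 b' \<subseteq> {(0,0,0,0)}" if "b \<in> {..<d}" "b' \<in> {..<d}" "b \<noteq> b'" for b b'
      using that \<open>\<eta> \<noteq> 0\<close> by (intro L1_L1_disjoint) (simp_all add: power_eq)
    show "L0 \<eta> a a \<inter> L1 \<eta> 1 b \<subseteq> {(0,0,0,0)}" for a b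
      using \<open>\<eta> \<noteq> 0\<close> \<open>\<eta> \<noteq> 1\<close> by (intro L0_L1_disjoint) auto
  qed (simp_all add: finite_fam0 finite_fam1 L0_nontrivial L1_nontrivial)
  then show ?thesis by simp
qed

lemma max_disjoint_fam0_fam2_ge:
  assumes "primitive_root d \<eta>" "2 \<le> d" "v \<noteq> 0"
  shows "2 * d \<le> max_disjoint (fam0 d \<eta> \<union> fam2 d \<eta> v)"
proof -
  have "\<eta> \<noteq> 0" "\<eta> ^ d = 1"
    using primitive_root_nonzero[OF assms(1)] assms by (simp_all add: primitive_root_def)
  note power_eq = primitive_root_power_eq_iff[OF assms(1)]
  have "card {..<d} + card {..<d} \<le> max_disjoint (fam0 d \<eta> \<union> fam2 d \<eta> v)"
  proof (rule card_le_max_disjoint_two_families[where f = "\<lambda>a. L0 \<eta> a (d - 1 - a)" and g = "\<lambda>b. L2 \<eta> v 0 b"])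
    show "(\<lambda>a. L0 \<eta> a (d - 1 - a)) ` {..<d} \<subseteq> fam0 d \<eta> \<union> fam2 d \<eta> v"
      using L0_in_fam0 by auto
    show "(\<lambda>b. L2 \<eta> v 0 b) ` {..<d} \<subseteq> fam0 d \<eta> \<union> fam2 d \<eta> v"
      using L2_in_fam2[OF \<open>\<eta> ^ d = 1\<close>] by auto
    show "L0 \<eta> a (d - 1 - a) \<inter> L0 \<eta> a' (d - 1 - a') \<subseteq> {(0,0,0,0)}"
      if "a \<in> {..<d}" "a' \<in> {..<d}" "a \<noteq> a'" for a a'
      using that by (intro L0_L0_disjoint) (simp_all add: power_eq)
    show "L2 \<eta> v 0 b \<inter> L2 \<eta> v 0 b' \<subseteq> {(0,0,0,0)}" if "b \<in> {..<d}" "b' \<in> {..<d}" "b \<noteq> b'" for b b'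
      using that assms(3) by (intro L2_L2_disjoint) (simp_all add: power_eq)
    show "L0 \<eta> a (d - 1 - a) \<inter> L2 \<eta> v 0 b \<subseteq> {(0,0,0,0)}" if "a \<in> {..<d}" for a b
    proof (rule L0_L2_disjoint)
      have "d - 1 - a + a = d - 1"
        using that by simp
      then show "\<eta> ^ (d - 1 - a + a) \<noteq> \<eta> ^ 0"
        using assms(2) power_eq[of "d - 1" 0] by simp
    qed (use \<open>\<eta> \<noteq> 0\<close> assms(3) in auto)
  qed (simp_all add: finite_fam0 finite_fam2 L0_nontrivial L2_nontrivial)
  then show ?thesis by simp
qed

lemma antidiagonal_power_ne:
  assumes "primitive_root d \<eta>" "a < d" "a' < d" "a \<noteq> a'"
  shows "\<eta> ^ (d - 1 - a) \<noteq> \<eta> ^ (d - 1 - a')"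
    and "\<eta> ^ (2 * a + c + (d - 1 - a)) \<noteq> \<eta> ^ (2 * a' + c + (d - 1 - a'))"
proof -
  have "\<eta> \<noteq> 0"
    using primitive_root_nonzero[OF assms(1)] assms(2) by simp
  show "\<eta> ^ (d - 1 - a) \<noteq> \<eta> ^ (d - 1 - a')"
    using assms by (simp add: primitive_root_power_eq_iff)
  have exponents: "2 * a + c + (d - 1 - a) = (d - 1 + c) + a" "2 * a' + c + (d - 1 - a') = (d - 1 + c) + a'"
    using assms(2,3) by simp_all
  show "\<eta> ^ (2 * a + c + (d - 1 - a)) \<noteq> \<eta> ^ (2 * a' + c + (d - 1 - a'))"
    unfolding exponents power_add using assms \<open>\<eta> \<noteq> 0\<close> by (simp add: primitive_root_power_eq_iff)
qed

lemma max_disjoint_fam1_fam2_ge: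
  assumes "primitive_root d \<eta>" "2 \<le> d" "v \<noteq> 0"
  shows "2 * d \<le> max_disjoint (fam1 d \<eta> \<union> fam2 d \<eta> v)"
proof -
  have "\<eta> \<noteq> 0" "\<eta> \<noteq> 1" "\<eta> ^ d = 1"
    using primitive_root_nonzero[OF assms(1)] primitive_root_neq_1[OF assms(1)] assms
    by (simp_all add: primitive_root_def)
  obtain c :: nat where c: "v\<^sup>2 * \<eta> ^ c \<noteq> 1"
    using \<open>\<eta> \<noteq> 1\<close> by (cases "v\<^sup>2 = 1") (auto intro: that[of 0] that[of 1])
  have "card {..<d} + card {..<d} \<le> max_disjoint (fam1 d \<eta> \<union> fam2 d \<eta> v)"
  proof (rule card_le_max_disjoint_two_families[where f = "\<lambda>a. L1 \<eta> (2 * a) (d - 1 - a)"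
        and g = "\<lambda>b. L2 \<eta> v (2 * b + c) (d - 1 - b)"])
    show "(\<lambda>a. L1 \<eta> (2 * a) (d - 1 - a)) ` {..<d} \<subseteq> fam1 d \<eta> \<union> fam2 d \<eta> v"
      using L1_in_fam1[OF \<open>\<eta> ^ d = 1\<close>] by auto
    show "(\<lambda>b. L2 \<eta> v (2 * b + c) (d - 1 - b)) ` {..<d} \<subseteq> fam1 d \<eta> \<union> fam2 d \<eta> v"
      using L2_in_fam2[OF \<open>\<eta> ^ d = 1\<close>] by auto
    show "L1 \<eta> (2 * a) (d - 1 - a) \<inter> L1 \<eta> (2 * a') (d - 1 - a') \<subseteq> {(0,0,0,0)}"
      if "a \<in> {..<d}" "a' \<in> {..<d}" "a \<noteq> a'" for a a'
      using that antidiagonal_power_ne(1)[OF assms(1), of a a'] antidiagonal_power_ne(2)[OF assms(1), of a a' 0]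
      by (intro L1_L1_disjoint) simp_all
    show "L2 \<eta> v (2 * b + c) (d - 1 - b) \<inter> L2 \<eta> v (2 * b' + c) (d - 1 - b') \<subseteq> {(0,0,0,0)}"
      if "b \<in> {..<d}" "b' \<in> {..<d}" "b \<noteq> b'" for b b'
      using that assms(3) antidiagonal_power_ne[OF assms(1), of b b'] by (intro L2_L2_disjoint) simp_all
    show "L1 \<eta> (2 * a) (d - 1 - a) \<inter> L2 \<eta> v (2 * b + c) (d - 1 - b) \<subseteq> {(0,0,0,0)}"
      if "a \<in> {..<d}" "b \<in> {..<d}" for a b
    proof (rule L1_L2_disjoint)
      have exponents: "2 * a + 2 * (d - 1 - a) = 2 * (d - 1)" "2 * b + c + 2 * (d - 1 - b) = c + 2 * (d - 1)"
        using that by simp_all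
      have "\<eta> ^ (2 * (d - 1)) \<noteq> (v\<^sup>2 * \<eta> ^ c) * \<eta> ^ (2 * (d - 1))"
        using c \<open>\<eta> \<noteq> 0\<close> by simp
      then show "\<eta> ^ (2 * a + 2 * (d - 1 - a)) \<noteq> v\<^sup>2 * \<eta> ^ (2 * b + c + 2 * (d - 1 - b))"
        unfolding exponents by (simp add: power_add mult.assoc)
    qed (rule \<open>\<eta> \<noteq> 0\<close>)
  qed (simp_all add: finite_fam1 finite_fam2 L1_nontrivial L2_nontrivial)
  then show ?thesis by simp
qed

theorem corollary2p3:
  fixes d :: nat and \<eta> v :: complex
  assumes "d \<ge> 3" and "primitive_root d \<eta>" and "v ^ d = -1"
  shows "max_disjoint (fam0 d \<eta> \<union> fam1 d \<eta>) = 2 * d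
       \<and> max_disjoint (fam0 d \<eta> \<union> fam2 d \<eta> v) = 2 * d
       \<and> max_disjoint (fam1 d \<eta> \<union> fam2 d \<eta> v) = 2 * d
       \<and> 2 * d \<le> s_F d \<eta> v \<and> s_F d \<eta> v \<le> 3 * d"
proof -
  have "2 \<le> d" using assms(1) by simp
  have "v \<noteq> 0" using assms(1,3) by (auto simp: power_0_left)
  note finite = finite_fam0[of d \<eta>] finite_fam1[of d \<eta>] finite_fam2[of d \<eta> v]
  note upper = max_disjoint_fam0_le[of d \<eta>] max_disjoint_fam1_le[of d \<eta>] max_disjoint_fam2_le[of d \<eta> v]
    max_disjoint_Un_le[OF finite(1,2)] max_disjoint_Un_le[OF finite(1,3)] max_disjoint_Un_le[OF finite(2,3)]
  have "max_disjoint (fam0 d \<eta> \<union> fam1 d \<eta>) = 2 * d"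
    using upper max_disjoint_fam0_fam1_ge[OF assms(2) \<open>2 \<le> d\<close>] by linarith
  moreover have "max_disjoint (fam0 d \<eta> \<union> fam2 d \<eta> v) = 2 * d"
    using upper max_disjoint_fam0_fam2_ge[OF assms(2) \<open>2 \<le> d\<close> \<open>v \<noteq> 0\<close>] by linarith
  moreover have "max_disjoint (fam1 d \<eta> \<union> fam2 d \<eta> v) = 2 * d"
    using upper max_disjoint_fam1_fam2_ge[OF assms(2) \<open>2 \<le> d\<close> \<open>v \<noteq> 0\<close>] by linarith
  moreover have "max_disjoint (fam0 d \<eta> \<union> fam1 d \<eta>) \<le> s_F d \<eta> v"
    unfolding s_F_def lines_F_def by (rule max_disjoint_mono) (use finite in auto)
  moreover have "s_F d \<eta> v \<le> max_disjoint (fam0 d \<eta> \<union> fam1 d \<eta>) + max_disjoint (fam2 d \<eta> v)"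
    unfolding s_F_def lines_F_def by (rule max_disjoint_Un_le) (use finite in auto)
  ultimately show ?thesis
    using upper(3) by linarith
qed

end
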